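(* Let $n\ge 3$ be an integer and let $\varphi$ be the automorphism of $F$ with $\varphi(x)=y$, $\varphi(y)=x$. Then $(\varphi(r_1),\varphi(r_2))\sim_{AC}(r_1,r_2)$, where $(r_1,r_2)=\mathrm{AK}(n)=(xyxy^{-1}x^{-1}y^{-1},\ x^ny^{-(n+1)})$.
   Context: $F=F(x,y)$ is the free group on $\{x,y\}$. The Akbulut–Kurby pair is $\mathrm{AK}(n)=(xyxy^{-1}x^{-1}y^{-1},\ x^{n}y^{-(n+1)})$, i.e. the presentation $\langle x,y\mid xyx=yxy,\ x^n=y^{n+1}\rangle$ of the trivial group. The Andrews–Curtis (AC) moves on a pair $(r_1,r_2)\in F^2$ are: replace $r_i$ by $r_ir_j$ ($i\ne j$); replace $r_i$ by $r_i^{-1}$; replace $r_i$ by $w^{-1}r_iw$ for some $w\in F$. Two pairs are AC-equivalent, $\sim_{AC}$, if one can be obtained from the other by a finite sequence of AC-moves. *)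

theory Defs
  imports Main
begin

text \<open>The free group F(x,y) on two generators, modelled by freely reduced words.
A letter is a pair (g, inverted): (X, False) is x, (X, True) is x^{-1}.\<close>

datatype gen = X | Y

type_synonym letter = "gen \<times> bool"
type_synonym word = "letter list"

definition inv_letter :: "letter \<Rightarrow> letter" where
  "inv_letter a = (fst a, \<not> snd a)"

fun reduced :: "word \<Rightarrow> bool" where
  "reduced [] = True"
| "reduced [a] = True"
| "reduced (a # b # w) = (b \<noteq> inv_letter a \<and> reduced (b # w))"

definition F :: "word set" where
  "F = {w. reduced w}"

fun push :: "letter \<Rightarrow> word \<Rightarrow> word" where
  "push a [] = [a]"
| "push a (b # w) = (if b = inv_letter a then w else a # b # w)"

definition reduce :: "word \<Rightarrow> word" where
  "reduce w = foldr push w []"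

definition fmult :: "word \<Rightarrow> word \<Rightarrow> word" where
  "fmult u v = reduce (u @ v)"

definition finv :: "word \<Rightarrow> word" where
  "finv w = rev (map inv_letter w)"

definition x :: word where "x = [(X, False)]"
definition y :: word where "y = [(Y, False)]"

definition fpow :: "word \<Rightarrow> nat \<Rightarrow> word" where
  "fpow w n = reduce (concat (replicate n w))"

definition AK1 :: word where
  "AK1 = fmult x (fmult y (fmult x (fmult (finv y) (fmult (finv x) (finv y)))))"

definition AK2 :: "nat \<Rightarrow> word" where
  "AK2 n = fmult (fpow x n) (finv (fpow y (n + 1)))"

definition swap_gen :: "gen \<Rightarrow> gen" where
  "swap_gen g = (case g of X \<Rightarrow> Y | Y \<Rightarrow> X)"

definition phi :: "word \<Rightarrow> word" where
  "phi w = reduce (map (\<lambda>(g, e). (swap_gen g, e)) w)"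

inductive ac_move :: "word \<times> word \<Rightarrow> word \<times> word \<Rightarrow> bool" where
  mult1: "ac_move (r1, r2) (fmult r1 r2, r2)"
| mult2: "ac_move (r1, r2) (r1, fmult r2 r1)"
| inv1: "ac_move (r1, r2) (finv r1, r2)"
| inv2: "ac_move (r1, r2) (r1, finv r2)"
| conj1: "w \<in> F \<Longrightarrow> ac_move (r1, r2) (fmult (finv w) (fmult r1 w), r2)"
| conj2: "w \<in> F \<Longrightarrow> ac_move (r1, r2) (r1, fmult (finv w) (fmult r2 w))"

definition ac_equiv :: "word \<times> word \<Rightarrow> word \<times> word \<Rightarrow> bool" where
  "ac_equiv p q = ac_move\<^sup>*\<^sup>* p q"

end

theory Submission
  imports Defs
begin

text \<open>Since xyx = yxy, conjugation by xyx interchanges x and y modulo the first relator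
r1 = xyxy^-1x^-1y^-1 of AK(n), and \<phi>(r1) = r1^-1.
Hence inverting the first component and conjugating the second one by xyx turns
(\<phi>(r1), \<phi>(r2)) = (\<phi>(r1), y^n x^-(n+1)) into a pair (r1, w) with w equal to
x^n y^-(n+1) modulo insertions of r1. Each such insertion into the second component is
realised by AC-moves: replace r1 by its conjugate q^-1 r1 q, multiply p q by it to obtain p r1 q,
and conjugate the first component back.\<close>

lemma inv_letter_inv_letter [simp]: "inv_letter (inv_letter a) = a"
  by (simp add: inv_letter_def)

lemma inv_letter_neq [simp]: "inv_letter a \<noteq> a" "a \<noteq> inv_letter a"
  by (auto simp: inv_letter_def prod_eq_iff)

lemma reduced_ConsD: "reduced (a # w) \<Longrightarrow> reduced w"
  by (cases w) auto

lemma reduced_Cons_iff: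
  "reduced (a # w) \<longleftrightarrow> reduced w \<and> (w \<noteq> [] \<longrightarrow> hd w \<noteq> inv_letter a)"
  by (cases w) auto

lemma reduced_snoc_iff:
  "reduced (u @ [a]) \<longleftrightarrow> reduced u \<and> (u \<noteq> [] \<longrightarrow> a \<noteq> inv_letter (last u))"
proof (induction u)
  case (Cons b u)
  then show ?case by (cases u) (auto simp: reduced_Cons_iff)
qed simp

lemma reduced_replicate: "reduced (replicate n a)"
  by (induction n) (auto simp: reduced_Cons_iff)

lemma reduced_push: "reduced w \<Longrightarrow> reduced (push a w)"
  by (cases w) (auto dest: reduced_ConsD)

lemma reduced_foldr_push: "reduced z \<Longrightarrow> reduced (foldr push u z)"
  by (induction u) (auto intro: reduced_push)

lemma reduced_reduce [simp]: "reduced (reduce w)"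
  by (simp add: reduce_def reduced_foldr_push)

lemma push_reduced: "reduced (a # w) \<Longrightarrow> push a w = a # w"
  by (cases w) auto

lemma push_push_inv_letter: "reduced z \<Longrightarrow> push a (push (inv_letter a) z) = z"
  by (cases z) (auto simp: push_reduced)

lemma reduce_Nil [simp]: "reduce [] = []"
  by (simp add: reduce_def)

lemma reduce_Cons: "reduce (a # w) = push a (reduce w)"
  by (simp add: reduce_def)

lemma reduce_reduced: "reduced w \<Longrightarrow> reduce w = w"
proof (induction w)
  case (Cons a w)
  then show ?case
    by (simp add: reduce_Cons push_reduced reduced_ConsD[OF Cons.prems])
qed simp

lemma reduce_reduce [simp]: "reduce (reduce u) = reduce u"
  by (simp add: reduce_reduced)

lemma foldr_push_push:
  assumes "reduced w" "reduced z"
  shows "foldr push (push a w) z = push a (foldr push w z)"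
proof (cases w)
  case (Cons b w')
  then show ?thesis
    using assms reduced_foldr_push[of z w'] by (auto simp: push_push_inv_letter)
qed simp

lemma foldr_push_reduce: "reduced z \<Longrightarrow> foldr push (reduce u) z = foldr push u z"
  by (induction u) (simp_all add: reduce_Cons foldr_push_push)

lemma reduce_append: "reduce (u @ v) = foldr push u (reduce v)"
  by (simp add: reduce_def)

lemma reduce_append_reduce_left [simp]: "reduce (reduce u @ v) = reduce (u @ v)"
  by (simp add: reduce_append foldr_push_reduce)

lemma reduce_append_reduce_right [simp]: "reduce (u @ reduce v) = reduce (u @ v)"
  by (simp add: reduce_append reduce_reduced)

lemma finv_Cons: "finv (a # u) = finv u @ [inv_letter a]"
  by (simp add: finv_def)

lemma finv_Nil [simp]: "finv [] = []"
  by (simp add: finv_def)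

lemma finv_eq_Nil_iff [simp]: "finv w = [] \<longleftrightarrow> w = []"
  by (simp add: finv_def)

lemma finv_finv [simp]: "finv (finv u) = u"
  by (simp add: finv_def rev_map comp_def)

lemma last_finv: "w \<noteq> [] \<Longrightarrow> last (finv w) = inv_letter (hd w)"
  by (cases w) (simp_all add: finv_def)

lemma reduced_finv: "reduced w \<Longrightarrow> reduced (finv w)"
proof (induction w)
  case (Cons a w)
  then show ?case
    by (auto simp: finv_Cons reduced_snoc_iff reduced_Cons_iff last_finv)
qed simp

lemma reduce_append_finv: "reduce (u @ finv u @ z) = reduce z"
proof (induction u arbitrary: z)
  case (Cons a u)
  have "reduce ((a # u) @ finv (a # u) @ z) = push a (reduce (u @ finv u @ inv_letter a # z))"
    by (simp add: finv_Cons reduce_Cons)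
  also have "\<dots> = reduce z"
    using Cons by (simp add: reduce_Cons push_push_inv_letter)
  finally show ?case .
qed simp

lemma reduce_finv_append: "reduce (finv u @ u @ z) = reduce z"
  using reduce_append_finv[of "finv u" z] by simp

lemma reduce_infix_append_finv: "reduce (p @ u @ finv u @ z) = reduce (p @ z)"
  by (metis reduce_append reduce_append_finv)

lemma reduce_infix_finv_append: "reduce (p @ finv u @ u @ z) = reduce (p @ z)"
  by (metis reduce_append reduce_finv_append)

lemma ac_insert_reduced:
  assumes r: "reduced r" and q: "reduced q"
  shows "ac_move\<^sup>*\<^sup>* (r, reduce (p @ q)) (r, reduce (p @ r @ q))"
proof -
  define r' where "r' = fmult (finv q) (fmult r q)"
  have r'_eq: "r' = reduce (finv q @ r @ q)"
    by (simp add: r'_def fmult_def)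
  have q_F: "q \<in> F" "finv q \<in> F"
    using q reduced_finv by (auto simp: F_def)
  have "ac_move (r, reduce (p @ q)) (r', reduce (p @ q))"
    unfolding r'_def by (rule conj1[OF q_F(1)])
  moreover have "ac_move (r', reduce (p @ q)) (r', reduce (p @ r @ q))"
    using mult2[of r' "reduce (p @ q)"]
    by (simp add: fmult_def r'_eq reduce_infix_finv_append[where u = "finv q", simplified])
  moreover have "fmult (finv (finv q)) (fmult r' (finv q)) = r"
    using reduce_append_finv[of q "r @ q @ finv q"] reduce_infix_append_finv[of r q "[]"]
    by (simp add: fmult_def r'_eq reduce_reduced r)
  then have "ac_move (r', reduce (p @ r @ q)) (r, reduce (p @ r @ q))"
    using conj1[OF q_F(2), of r' "reduce (p @ r @ q)"] by simp
  ultimately show ?thesis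
    by (meson converse_rtranclp_into_rtranclp r_into_rtranclp)
qed

lemma ac_insert:
  assumes "reduced r"
  shows "ac_move\<^sup>*\<^sup>* (r, reduce (p @ q)) (r, reduce (p @ r @ q))"
  using ac_insert_reduced[OF assms reduced_reduce, of p q]
  by (metis append_assoc reduce_append_reduce_right)

inductive relator_step :: "word \<Rightarrow> word \<Rightarrow> word \<Rightarrow> bool" for r where
  free_reduction: "reduce u = reduce v \<Longrightarrow> relator_step r u v"
| insert_relator: "relator_step r (p @ q) (p @ r @ q)"

abbreviation relator_derives :: "word \<Rightarrow> word \<Rightarrow> word \<Rightarrow> bool" where
  "relator_derives r \<equiv> (relator_step r)\<^sup>*\<^sup>*"

lemma relator_derives_free_reduction: "reduce u = reduce v \<Longrightarrow> relator_derives r u v"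
  by (auto intro: relator_step.free_reduction)

lemma relator_derives_insert: "relator_derives r (p @ q) (p @ r @ q)"
  by (auto intro: relator_step.insert_relator)

lemma relator_step_append_context:
  "relator_step r u v \<Longrightarrow> relator_step r (a @ u @ b) (a @ v @ b)"
proof (induction rule: relator_step.induct)
  case (free_reduction u v)
  then have "reduce (u @ b) = reduce (v @ b)"
    by (metis reduce_append_reduce_left)
  then show ?case
    by (intro relator_step.free_reduction) (simp add: reduce_append)
next
  case (insert_relator p q)
  then show ?case
    using relator_step.insert_relator[of r "a @ p" "q @ b"] by simp
qed

lemma relator_derives_append:
  assumes "relator_derives r u1 v1" "relator_derives r u2 v2"
  shows "relator_derives r (u1 @ u2) (v1 @ v2)"
proof -
  have in_context: "relator_derives r (a @ u @ b) (a @ v @ b)"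
    if "relator_derives r u v" for a b u v
    using that
    by (induction rule: rtranclp_induct)
       (auto intro: rtranclp.rtrancl_into_rtrancl relator_step_append_context)
  show ?thesis
    using in_context[OF assms(1), of "[]" u2] in_context[OF assms(2), of v1 "[]"]
    by (auto intro: rtranclp_trans)
qed

lemma ac_relator_derives:
  assumes "relator_derives r u v" "reduced r"
  shows "ac_move\<^sup>*\<^sup>* (r, reduce u) (r, reduce v)"
  using assms(1)
proof (induction rule: rtranclp_induct)
  case (step v w)
  from step(2) have "ac_move\<^sup>*\<^sup>* (r, reduce v) (r, reduce w)"
    by cases (simp_all add: ac_insert[OF assms(2)])
  with step(3) show ?case
    by (rule rtranclp_trans)
qed simp

abbreviation "xl \<equiv> (X, False)"
abbreviation "xi \<equiv> (X, True)"
abbreviation "yl \<equiv> (Y, False)"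
abbreviation "yi \<equiv> (Y, True)"

lemma AK1_eq: "AK1 = [xl, yl, xl, yi, xi, yi]"
  by (simp add: AK1_def fmult_def reduce_def x_def y_def finv_def inv_letter_def)

lemma AK2_eq: "AK2 n = reduce (replicate n xl @ replicate (n + 1) yi)"
proof -
  have "concat (replicate k [a]) = replicate k a" for k a
    by (induction k) auto
  then show ?thesis
    using reduced_replicate[of "Suc k" for k]
    by (simp add: AK2_def fmult_def fpow_def x_def y_def finv_def inv_letter_def
        reduce_reduced reduced_replicate replicate_append_same del: replicate_Suc)
qed

definition swap_letter :: "letter \<Rightarrow> letter" where
  "swap_letter a = (swap_gen (fst a), snd a)"

lemma phi_eq: "phi w = reduce (map swap_letter w)"
  unfolding phi_def swap_letter_def by (simp add: case_prod_beta')

lemma push_map_swap_letter: "push (swap_letter a) (map swap_letter w) = map swap_letter (push a w)"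
  by (cases w) (auto simp: swap_letter_def inv_letter_def swap_gen_def prod_eq_iff split: gen.splits)

lemma reduce_map_swap_letter: "reduce (map swap_letter w) = map swap_letter (reduce w)"
  by (induction w) (simp_all add: reduce_Cons push_map_swap_letter)

lemma phi_AK1: "phi AK1 = finv AK1"
  by (simp add: phi_eq AK1_eq swap_letter_def swap_gen_def reduce_def finv_def inv_letter_def)

definition xyx :: word where "xyx = [xl, yl, xl]"

lemma conj_xyx_yl: "relator_derives AK1 (finv xyx @ [yl] @ xyx) [xl]"
proof -
  have "relator_derives AK1 (finv xyx @ AK1 @ [yl] @ xyx) [xl]"
    by (rule relator_derives_free_reduction)
       (simp add: AK1_eq xyx_def finv_def reduce_def inv_letter_def)
  then show ?thesis
    using relator_derives_insert[of AK1 "finv xyx"] by (auto intro: rtranclp_trans)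
qed

lemma conj_xyx_xi: "relator_derives AK1 (finv xyx @ [xi] @ xyx) [yi]"
proof -
  have "relator_derives AK1 (finv xyx @ [xi] @ xyx) ([xi, yi, xi] @ [yl, xl])"
    by (rule relator_derives_free_reduction) (simp add: xyx_def finv_def reduce_def inv_letter_def)
  moreover have "relator_derives AK1 ([xi, yi, xi] @ AK1 @ [yl, xl]) [yi]"
    by (rule relator_derives_free_reduction) (simp add: AK1_eq reduce_def inv_letter_def)
  ultimately show ?thesis
    using relator_derives_insert[of AK1 "[xi, yi, xi]"] by (auto intro: rtranclp_trans)
qed

lemma conj_xyx_swaps_letters:
  "set w \<subseteq> {yl, xi} \<Longrightarrow> relator_derives AK1 (finv xyx @ w @ xyx) (map swap_letter w)"
proof (induction w)
  case Nil
  show ?case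
    by (rule relator_derives_free_reduction) (simp add: reduce_finv_append[of xyx "[]", simplified])
next
  case (Cons a w)
  have "relator_derives AK1 (finv xyx @ [a] @ xyx) [swap_letter a]"
    using Cons.prems conj_xyx_yl conj_xyx_xi by (auto simp: swap_letter_def swap_gen_def)
  moreover have "relator_derives AK1 (finv xyx @ w @ xyx) (map swap_letter w)"
    using Cons by simp
  moreover have "relator_derives AK1 (finv xyx @ (a # w) @ xyx)
      ((finv xyx @ [a] @ xyx) @ (finv xyx @ w @ xyx))"
    by (rule relator_derives_free_reduction)
       (simp add: reduce_infix_append_finv[of "finv xyx @ [a]" xyx, simplified])
  ultimately show ?case
    by (auto intro: rtranclp_trans dest: relator_derives_append)
qed

theorem lemma4:
  fixes n :: nat
  assumes "n \<ge> 3"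
  shows "ac_equiv (phi AK1, phi (AK2 n)) (AK1, AK2 n)"
proof -
  \<comment> \<open>The argument works for every n.\<close>
  define w where "w = replicate n yl @ replicate (n + 1) xi"
  have swap_w: "map swap_letter w = replicate n xl @ replicate (n + 1) yi"
    by (simp add: w_def swap_letter_def swap_gen_def)
  have "map swap_letter (map swap_letter w) = w"
    by (simp add: w_def swap_letter_def swap_gen_def)
  then have phi_AK2: "phi (AK2 n) = reduce w"
    by (metis AK2_eq phi_eq reduce_map_swap_letter reduce_reduce swap_w)
  have "ac_move (phi AK1, reduce w) (AK1, reduce w)"
    using inv1[of "phi AK1" "reduce w"] by (simp add: phi_AK1)
  moreover have "ac_move (AK1, reduce w) (AK1, reduce (finv xyx @ w @ xyx))"
    using conj2[of xyx AK1 "reduce w"] by (simp add: F_def xyx_def inv_letter_def fmult_def)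
  moreover have "ac_move\<^sup>*\<^sup>* (AK1, reduce (finv xyx @ w @ xyx)) (AK1, AK2 n)"
  proof -
    have "set w \<subseteq> {yl, xi}"
      by (auto simp: w_def)
    from ac_relator_derives[OF conj_xyx_swaps_letters[OF this]]
    show ?thesis
      by (simp add: AK1_eq AK2_eq inv_letter_def swap_w)
  qed
  ultimately show ?thesis
    unfolding ac_equiv_def phi_AK2 by (meson converse_rtranclp_into_rtranclp)
qed

end
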